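(* Let $n$ be a positive integer and let $A$ be a binary $n\times n$ matrix in which every row has weight at least $9$. Then there is a set $S$ of columns of $A$ with $|S|\le 0.49\,n$ such that, in the $n\times |S|$ submatrix of $A$ formed by the columns in $S$, every row has weight at least $2$.
   Context: A binary matrix has entries in $\{0,1\}$. The weight of a binary vector (row or column) is its number of $1$-entries. *)

theory Defs
  imports Complex_Main
begin

definition binary_matrix :: "nat \<Rightarrow> (nat \<Rightarrow> nat \<Rightarrow> nat) \<Rightarrow> bool" where
  "binary_matrix n A \<longleftrightarrow> (\<forall>i<n. \<forall>j<n. A i j \<in> {0, 1})"

definition row_weight_on :: "(nat \<Rightarrow> nat \<Rightarrow> nat) \<Rightarrow> nat set \<Rightarrow> nat \<Rightarrow> nat" where
  "row_weight_on A S i = card {j \<in> S. A i j = 1}"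

end

theory Submission
  imports Defs
begin

text \<open>Choose each column independently with probability 2/5 and then, for every row that
  received fewer than two of some fixed nine of its 1-columns, add the missing ones. The
  expected number of columns chosen is at most \<open>(2/5 + (2 \<cdot> 3^9 + 18 \<cdot> 3^8) / 5^9) n < 0.49 n\<close>,
  so some choice does at least as well. The probability space is made discrete: a subset
  \<open>T\<close> of \<open>V\<close> gets the integer weight \<open>2^|T| 3^|V - T|\<close>, the total weight being \<open>5^|V|\<close>.\<close>

definition subset_weight :: "nat \<Rightarrow> nat \<Rightarrow> 'a set \<Rightarrow> 'a set \<Rightarrow> nat" where
  "subset_weight a b V T = a ^ card T * b ^ card (V - T)"

lemma sum_subset_weight:
  assumes "finite V"
  shows "(\<Sum>T\<in>Pow V. subset_weight a b V T) = (a + b) ^ card V"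
  using prod_add[OF assms, of "\<lambda>_. a" "\<lambda>_. b"] by (simp add: subset_weight_def)

lemma sum_subset_weight_Int:
  assumes "finite V" "R \<subseteq> V"
  shows "(\<Sum>T\<in>Pow V. subset_weight a b V T * g (T \<inter> R))
       = (a + b) ^ card (V - R) * (\<Sum>U\<in>Pow R. subset_weight a b R U * g U)"
proof -
  have fin_R: "finite R" using assms finite_subset by blast
  have bij: "bij_betw (\<lambda>(U, X). U \<union> X) (Pow R \<times> Pow (V - R)) (Pow V)"
    by (rule bij_betw_byWitness[where f' = "\<lambda>T. (T \<inter> R, T - R)"]) (use assms in auto)
  have split_weight: "subset_weight a b V (U \<union> X) = subset_weight a b R U * subset_weight a b (V - R) X"
    if "U \<subseteq> R" "X \<subseteq> V - R" for U X
  proof -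
    have "card (U \<union> X) = card U + card X"
      using that fin_R assms by (intro card_Un_disjoint) (auto intro: finite_subset)
    moreover have "V - (U \<union> X) = (R - U) \<union> ((V - R) - X)" using that assms by auto
    then have "card (V - (U \<union> X)) = card (R - U) + card ((V - R) - X)"
      using fin_R assms by (simp add: card_Un_disjoint disjoint_iff)
    ultimately show ?thesis by (simp add: subset_weight_def power_add algebra_simps)
  qed
  have "(\<Sum>T\<in>Pow V. subset_weight a b V T * g (T \<inter> R))
      = (\<Sum>(U, X)\<in>Pow R \<times> Pow (V - R). subset_weight a b V (U \<union> X) * g ((U \<union> X) \<inter> R))"
    by (subst sum.reindex_bij_betw[OF bij, symmetric]) (simp add: case_prod_unfold)
  also have "\<dots> = (\<Sum>(U, X)\<in>Pow R \<times> Pow (V - R). subset_weight a b R U * g U * subset_weight a b (V - R) X)"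
  proof (intro sum.cong refl, clarify)
    fix U X assume "U \<subseteq> R" "X \<subseteq> V - R"
    moreover from this have "(U \<union> X) \<inter> R = U" by auto
    ultimately show "subset_weight a b V (U \<union> X) * g ((U \<union> X) \<inter> R)
        = subset_weight a b R U * g U * subset_weight a b (V - R) X"
      by (simp add: split_weight)
  qed
  also have "\<dots> = (\<Sum>U\<in>Pow R. subset_weight a b R U * g U * (a + b) ^ card (V - R))"
    using assms by (simp add: sum.cartesian_product[symmetric] sum_distrib_left[symmetric] sum_subset_weight)
  finally show ?thesis by (simp add: sum_distrib_left mult.commute)
qed

lemma sum_Pow_card:
  assumes "finite R"
  shows "(\<Sum>U\<in>Pow R. f (card U) :: nat) = (\<Sum>k\<le>card R. (card R choose k) * f k)"
proof -
  have "(\<Sum>U\<in>Pow R. f (card U)) = (\<Sum>k\<le>card R. \<Sum>U\<in>{U\<in>Pow R. card U = k}. f (card U))"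
    using assms by (intro sum.group[symmetric]) (auto intro: card_mono)
  also have "\<dots> = (\<Sum>k\<le>card R. card {U. U \<subseteq> R \<and> card U = k} * f k)"
    by (intro sum.cong refl) (simp add: conj_commute)
  finally show ?thesis by (simp add: n_subsets[OF assms])
qed

lemma sum_subset_weight_card:
  assumes "finite V"
  shows "(\<Sum>T\<in>Pow V. subset_weight a b V T * card T) = card V * a * (a + b) ^ (card V - 1)"
proof -
  have card_as_sum: "card T = (\<Sum>j\<in>V. card (T \<inter> {j}))" if "T \<subseteq> V" for T
  proof -
    have "(\<Sum>j\<in>V. card (T \<inter> {j})) = (\<Sum>j\<in>V. if j \<in> T then 1 else 0)"
      by (intro sum.cong) auto
    also have "\<dots> = card T" using that assms by (simp add: sum.If_cases Int_absorb1)
    finally show ?thesis by simp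
  qed
  have "(\<Sum>T\<in>Pow V. subset_weight a b V T * card T)
      = (\<Sum>j\<in>V. \<Sum>T\<in>Pow V. subset_weight a b V T * card (T \<inter> {j}))"
    by (simp add: card_as_sum sum_distrib_left sum.swap[of _ V])
  also have "\<dots> = (\<Sum>j\<in>V. a * (a + b) ^ (card V - 1))"
  proof (intro sum.cong refl)
    fix j assume "j \<in> V"
    then show "(\<Sum>T\<in>Pow V. subset_weight a b V T * card (T \<inter> {j})) = a * (a + b) ^ (card V - 1)"
      using sum_subset_weight_Int[OF assms, of "{j}" a b card] assms
      by (simp add: Pow_insert subset_weight_def)
  qed
  finally show ?thesis by simp
qed

lemma sum_subset_weight_deficit:
  assumes "finite R"
  shows "(\<Sum>U\<in>Pow R. subset_weight a b R U * (2 - card U))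
       = 2 * b ^ card R + card R * a * b ^ (card R - 1)"
proof (cases "card R = 0")
  case True
  then show ?thesis using assms by (simp add: subset_weight_def)
next
  case False
  define r where "r = card R"
  have "(\<Sum>U\<in>Pow R. subset_weight a b R U * (2 - card U))
      = (\<Sum>U\<in>Pow R. (\<lambda>k. a ^ k * b ^ (r - k) * (2 - k)) (card U))"
    using assms by (intro sum.cong refl) (auto simp: subset_weight_def card_Diff_subset finite_subset r_def)
  also have "\<dots> = (\<Sum>k\<le>r. (r choose k) * (a ^ k * b ^ (r - k) * (2 - k)))"
    using sum_Pow_card[OF assms] by (simp add: r_def)
  also have "\<dots> = (\<Sum>k<2. (r choose k) * (a ^ k * b ^ (r - k) * (2 - k)))"
    using False by (intro sum.mono_neutral_right) (auto simp: r_def)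
  finally show ?thesis by (simp add: numeral_2_eq_2 r_def)
qed

lemma sum_subset_weight_cover_cost:
  assumes "finite V" "finite I" "\<And>i. i \<in> I \<Longrightarrow> R i \<subseteq> V \<and> card (R i) = r"
  shows "(\<Sum>T\<in>Pow V. subset_weight a b V T * (card T + (\<Sum>i\<in>I. 2 - card (T \<inter> R i))))
       = card V * a * (a + b) ^ (card V - 1)
         + card I * ((a + b) ^ (card V - r) * (2 * b ^ r + r * a * b ^ (r - 1)))"
proof -
  have row_term: "(\<Sum>T\<in>Pow V. subset_weight a b V T * (2 - card (T \<inter> R i)))
      = (a + b) ^ (card V - r) * (2 * b ^ r + r * a * b ^ (r - 1))" if "i \<in> I" for i
  proof -
    have "R i \<subseteq> V" "card (R i) = r" "finite (R i)"
      using assms that finite_subset by blast+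
    then show ?thesis
      using sum_subset_weight_Int[OF assms(1), of "R i" a b "\<lambda>U. 2 - card U"]
        sum_subset_weight_deficit[of "R i" a b]
      by (simp add: card_Diff_subset)
  qed
  have "(\<Sum>T\<in>Pow V. subset_weight a b V T * (card T + (\<Sum>i\<in>I. 2 - card (T \<inter> R i))))
      = (\<Sum>T\<in>Pow V. subset_weight a b V T * card T)
        + (\<Sum>i\<in>I. \<Sum>T\<in>Pow V. subset_weight a b V T * (2 - card (T \<inter> R i)))"
    by (simp add: distrib_left sum.distrib sum_distrib_left sum.swap[of _ I])
  then show ?thesis by (simp add: sum_subset_weight_card[OF assms(1)] row_term)
qed

lemma exists_le_weighted_average:
  fixes w f :: "'a \<Rightarrow> 'b :: linordered_semidom"
  assumes "finite A" "A \<noteq> {}" "\<And>x. x \<in> A \<Longrightarrow> w x > 0"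
    and "(\<Sum>x\<in>A. w x * f x) \<le> (\<Sum>x\<in>A. w x) * c"
  shows "\<exists>x\<in>A. f x \<le> c"
proof (rule ccontr)
  assume "\<not> ?thesis"
  then have "(\<Sum>x\<in>A. w x * c) < (\<Sum>x\<in>A. w x * f x)"
    using assms by (intro sum_strict_mono mult_strict_left_mono) auto
  then show False using assms(4) by (simp add: sum_distrib_right)
qed

lemma exists_superset_meeting_demands:
  assumes "finite I" "finite V" "T \<subseteq> V" "\<And>i. i \<in> I \<Longrightarrow> R i \<subseteq> V \<and> k \<le> card (R i)"
  shows "\<exists>S. T \<subseteq> S \<and> S \<subseteq> V \<and> card S \<le> card T + (\<Sum>i\<in>I. k - card (T \<inter> R i))
             \<and> (\<forall>i\<in>I. k \<le> card (S \<inter> R i))"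
proof -
  have fin_R: "finite (R i)" if "i \<in> I" for i
    using assms(2,4) that finite_subset by blast
  have "\<exists>F. F \<subseteq> R i - T \<and> card F = k - card (T \<inter> R i)" if "i \<in> I" for i
  proof -
    have "card (R i - T) = card (R i) - card (T \<inter> R i)"
      using fin_R[OF that] by (simp add: card_Diff_subset_Int Int_commute)
    then have "k - card (T \<inter> R i) \<le> card (R i - T)"
      using assms(4)[OF that] by (simp add: diff_le_mono)
    then show ?thesis by (meson obtain_subset_with_card_n)
  qed
  then obtain F where F: "\<And>i. i \<in> I \<Longrightarrow> F i \<subseteq> R i - T \<and> card (F i) = k - card (T \<inter> R i)"
    by metis
  define S where "S = T \<union> (\<Union>i\<in>I. F i)"
  have "card S \<le> card T + (\<Sum>i\<in>I. card (F i))"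
    unfolding S_def using card_Un_le[of T] card_UN_le[OF assms(1), of F] by (meson add_left_mono order_trans)
  also have "\<dots> = card T + (\<Sum>i\<in>I. k - card (T \<inter> R i))"
    using F by simp
  finally have card_S: "card S \<le> card T + (\<Sum>i\<in>I. k - card (T \<inter> R i))" .
  have "k \<le> card (S \<inter> R i)" if "i \<in> I" for i
  proof -
    have fin_F: "finite (F i)" using F[OF that] fin_R[OF that] finite_subset by blast
    have "k \<le> card (T \<inter> R i) + card (F i)" using F[OF that] by simp
    also have "\<dots> = card ((T \<inter> R i) \<union> F i)"
      using F[OF that] fin_R[OF that] fin_F by (intro card_Un_disjoint[symmetric]) auto
    also have "\<dots> \<le> card (S \<inter> R i)"
      using F[OF that] fin_R[OF that] that unfolding S_def by (intro card_mono) auto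
    finally show ?thesis .
  qed
  moreover have "S \<subseteq> V" using assms F unfolding S_def by blast
  ultimately show ?thesis using card_S unfolding S_def by blast
qed

lemma exists_cheap_subset:
  assumes "finite V" "finite I" "I \<noteq> {}" "card I = card V"
    and rows: "\<And>i. i \<in> I \<Longrightarrow> R i \<subseteq> V \<and> card (R i) = 9"
  shows "\<exists>T\<in>Pow V. 100 * (card T + (\<Sum>i\<in>I. 2 - card (T \<inter> R i))) \<le> 49 * card V"
proof -
  define n where "n = card V"
  obtain m where m: "n = m + 9"
    using assms(3) rows card_mono[OF assms(1)] unfolding n_def by (metis ex_in_conv le_add_diff_inverse2)
  have "(\<Sum>T\<in>Pow V. subset_weight 2 3 V T * (card T + (\<Sum>i\<in>I. 2 - card (T \<inter> R i))))
      = n * 2 * 5 ^ (n - 1) + n * (5 ^ (n - 9) * (2 * 3 ^ 9 + 9 * 2 * 3 ^ 8))"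
    using sum_subset_weight_cover_cost[where a = 2 and b = 3 and r = 9, OF assms(1,2) rows] assms(4)
    by (simp add: n_def)
  then have "(\<Sum>T\<in>Pow V. subset_weight 2 3 V T * (100 * (card T + (\<Sum>i\<in>I. 2 - card (T \<inter> R i)))))
      = 100 * (n * 2 * 5 ^ (n - 1) + n * (5 ^ (n - 9) * (2 * 3 ^ 9 + 9 * 2 * 3 ^ 8)))"
    by (simp only: mult.left_commute[of _ 100] flip: sum_distrib_left)
  also have "\<dots> = 93871400 * (n * 5 ^ m)"
    by (simp add: m power_add)
  also have "\<dots> \<le> 5 ^ n * (49 * n)" \<comment> \<open>\<open>93871400 = 100 (2 \<cdot> 5^8 + 2 \<cdot> 3^9 + 18 \<cdot> 3^8) < 49 \<cdot> 5^9\<close>\<close>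
    by (simp add: m power_add)
  also have "\<dots> = (\<Sum>T\<in>Pow V. subset_weight 2 3 V T) * (49 * card V)"
    using sum_subset_weight[OF assms(1)] by (simp add: n_def)
  finally show ?thesis
    using assms(1) by (intro exists_le_weighted_average) (auto simp: subset_weight_def)
qed

theorem theorem3p1:
  fixes n :: nat and A :: "nat \<Rightarrow> nat \<Rightarrow> nat"
  assumes "n > 0"
    and "binary_matrix n A"
    and "\<forall>i<n. row_weight_on A {..<n} i \<ge> 9"
  shows "\<exists>S. S \<subseteq> {..<n} \<and> real (card S) \<le> 0.49 * real n
             \<and> (\<forall>i<n. row_weight_on A S i \<ge> 2)"
proof -
  have "\<exists>R. R \<subseteq> {j\<in>{..<n}. A i j = 1} \<and> card R = 9" if "i < n" for i
    using assms(3) that unfolding row_weight_on_def by (meson obtain_subset_with_card_n)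
  then obtain R where R: "\<And>i. i < n \<Longrightarrow> R i \<subseteq> {j\<in>{..<n}. A i j = 1} \<and> card (R i) = 9"
    by metis
  then have rows: "\<And>i. i \<in> {..<n} \<Longrightarrow> R i \<subseteq> {..<n} \<and> card (R i) = 9" by blast
  obtain T where T: "T \<subseteq> {..<n}" "100 * (card T + (\<Sum>i<n. 2 - card (T \<inter> R i))) \<le> 49 * n"
    using exists_cheap_subset[of "{..<n}" "{..<n}" R] rows assms(1) by auto
  obtain S where S: "S \<subseteq> {..<n}" "card S \<le> card T + (\<Sum>i<n. 2 - card (T \<inter> R i))"
      "\<And>i. i < n \<Longrightarrow> 2 \<le> card (S \<inter> R i)"
    using exists_superset_meeting_demands[of "{..<n}" "{..<n}" T R 2] T(1) rows by auto
  have "2 \<le> row_weight_on A S i" if "i < n" for i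
  proof -
    have "2 \<le> card (S \<inter> R i)" using S(3) that .
    also have "\<dots> \<le> card {j \<in> S. A i j = 1}"
      using R[OF that] S(1) by (intro card_mono) (auto intro: finite_subset)
    finally show ?thesis unfolding row_weight_on_def .
  qed
  moreover have "real (card S) \<le> 0.49 * real n" using S(2) T(2) by simp
  ultimately show ?thesis using S(1) by blast
qed

end
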